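(* Consider a dynamic finite set $S$ with a function $f:S\to\mathbb{Z}_{\ge0}$ that is modified only by the following restricted operations: insert a new element $x$ with $f(x)=0$; delete an element $x$ with $f(x)=0$; increment $f(x)$ by $1$ for some $x\in S$; decrement $f(x)$ by $1$ for some $x\in S$ with $f(x)\ge1$. If, over some contiguous sequence of such operations, the $h$-index of $S$ and $f$ changes from $h$ (before the sequence) to $h'>h$ (after the sequence), then the sequence contains at least $(h'-h)^2$ increment operations.
   Context: For a finite set $S$ and $f:S\to\mathbb{Z}_{\ge0}$, the $h$-index of $S$ and $f$ is the largest integer $h\ge 0$ such that there is a subset $H\subseteq S$ with $|H|=h$ and $f(x)\ge h$ for all $x\in H$. *)

theory Defs
  imports Main
begin

definition hindex :: "'a set \<Rightarrow> ('a \<Rightarrow> nat) \<Rightarrow> nat" where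
  "hindex S f = (GREATEST h. \<exists>H \<subseteq> S. card H = h \<and> (\<forall>x\<in>H. h \<le> f x))"

datatype 'a op = Ins 'a | Del 'a | Inc 'a | Dec 'a

inductive step :: "'a set \<times> ('a \<Rightarrow> nat) \<Rightarrow> 'a op \<Rightarrow> 'a set \<times> ('a \<Rightarrow> nat) \<Rightarrow> bool" where
  ins: "x \<notin> S \<Longrightarrow> step (S, f) (Ins x) (insert x S, f(x := 0))"
| del: "x \<in> S \<Longrightarrow> f x = 0 \<Longrightarrow> step (S, f) (Del x) (S - {x}, f)"
| inc: "x \<in> S \<Longrightarrow> step (S, f) (Inc x) (S, f(x := f x + 1))"
| dec: "x \<in> S \<Longrightarrow> 1 \<le> f x \<Longrightarrow> step (S, f) (Dec x) (S, f(x := f x - 1))"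

inductive steps :: "'a set \<times> ('a \<Rightarrow> nat) \<Rightarrow> 'a op list \<Rightarrow> 'a set \<times> ('a \<Rightarrow> nat) \<Rightarrow> bool" where
  nil: "steps st [] st"
| cons: "step st o1 st1 \<Longrightarrow> steps st1 ops st2 \<Longrightarrow> steps st (o1 # ops) st2"

fun is_inc :: "'a op \<Rightarrow> bool" where
  "is_inc (Inc _) = True"
| "is_inc _ = False"

end

theory Submission
  imports Defs
begin

(* Proof idea: a potential argument.  For thresholds h \<le> k let
     pot h k S f = \<Sum>x\<in>S. (min (f x) k - h)     (truncated subtraction on nat),
   the total amount by which the values, capped at k, exceed h.
   (1) A single operation raises the potential by at most one, and only an
       increment can raise it at all; hence along a sequence of operations the
       potential grows by at most the number of increments.
   (2) With h the initial h-index, at most h elements have value above h, so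
       the initial potential is at most h * (k - h).
   (3) With k the final h-index, the k elements witnessing it contribute k - h
       each, so the final potential is at least k * (k - h).
   Comparing, k * (k - h) \<le> h * (k - h) + #increments, i.e.
   (k - h)^2 \<le> #increments. *)

definition pot :: "nat \<Rightarrow> nat \<Rightarrow> 'a set \<Rightarrow> ('a \<Rightarrow> nat) \<Rightarrow> nat" where
  "pot h k S f = (\<Sum>x\<in>S. min (f x) k - h)"

lemma step_finite:
  assumes "step (S, f) o1 (S1, f1)" "finite S"
  shows "finite S1"
  using assms by (cases rule: step.cases) auto

lemma steps_finite:
  assumes "steps st ops st'" "finite (fst st)"
  shows "finite (fst st')"
  using assms
proof (induction rule: steps.induct)
  case (cons st o1 st1 ops st2)
  then show ?case using step_finite[of "fst st" "snd st" o1 "fst st1" "snd st1"] by simp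
qed simp

(* Effect (1) for a single operation: insertions and deletions touch only
   elements of value 0, which contribute nothing; a decrement cannot increase
   any summand; an increment raises one summand by at most one. *)
lemma step_pot:
  assumes "step (S, f) o1 (S1, f1)" "finite S"
  shows "pot h k S1 f1 \<le> pot h k S f + (if is_inc o1 then 1 else 0)"
  using assms
proof (cases rule: step.cases)
  case (ins x)
  have "(\<Sum>y\<in>S. min ((f(x:=0)) y) k - h) = (\<Sum>y\<in>S. min (f y) k - h)"
    using ins by (intro sum.cong) auto
  then show ?thesis using ins assms(2) by (simp add: pot_def)
next
  case (del x)
  have "pot h k S f = (min (f x) k - h) + pot h k (S - {x}) f"
    using del assms(2) by (simp add: pot_def sum.remove)
  then show ?thesis using del by simp
next
  case (inc x)
  let ?f1 = "f(x := f x + 1)"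
  have rest: "pot h k (S - {x}) ?f1 = pot h k (S - {x}) f"
    unfolding pot_def by (intro sum.cong) auto
  have "pot h k S ?f1 = (min (f x + 1) k - h) + pot h k (S - {x}) ?f1"
    using inc assms(2) by (simp add: pot_def sum.remove)
  also have "\<dots> \<le> (min (f x) k - h) + 1 + pot h k (S - {x}) f"
    using rest by simp
  also have "\<dots> = pot h k S f + 1"
    using inc assms(2) by (simp add: pot_def sum.remove)
  finally show ?thesis using inc by simp
next
  case (dec x)
  have "pot h k S (f(x := f x - 1)) \<le> pot h k S f"
    unfolding pot_def by (intro sum_mono) auto
  then show ?thesis using dec by simp
qed

lemma steps_pot:
  assumes "steps st ops st'" "finite (fst st)"
  shows "pot h k (fst st') (snd st') \<le> pot h k (fst st) (snd st) + length (filter is_inc ops)"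
  using assms
proof (induction rule: steps.induct)
  case (nil st)
  then show ?case by simp
next
  case (cons st o1 st1 ops st2)
  obtain S f S1 f1 where st: "st = (S, f)" and st1: "st1 = (S1, f1)"
    by (cases st, cases st1)
  have "finite S1" using step_finite cons.hyps(1) cons.prems st st1 by fastforce
  have "pot h k S1 f1 \<le> pot h k S f + (if is_inc o1 then 1 else 0)"
    using step_pot cons.hyps(1) cons.prems st st1 by fastforce
  then show ?case using cons.IH \<open>finite S1\<close> st st1 by auto
qed

(* Any candidate value for the h-index is bounded by card S, so the
   GREATEST in its definition is well behaved. *)
lemma hindex_candidate_le_card:
  assumes "finite S" "H \<subseteq> S" "card H = y"
  shows "y \<le> card S"
  using assms card_mono by blast

lemma hindex_witness:
  assumes "finite S"
  shows "\<exists>H \<subseteq> S. card H = hindex S f \<and> (\<forall>x\<in>H. hindex S f \<le> f x)"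
  unfolding hindex_def
  by (rule GreatestI_nat[where k=0 and b="card S"])
     (use hindex_candidate_le_card[OF assms] in auto)

lemma hindex_maximal:
  assumes "finite S" "H \<subseteq> S" "\<forall>x\<in>H. card H \<le> f x"
  shows "card H \<le> hindex S f"
  unfolding hindex_def
  by (rule Greatest_le_nat[where b="card S"])
     (use hindex_candidate_le_card[OF assms(1)] assms in auto)

(* At most hindex S f elements have value strictly above hindex S f:
   otherwise hindex S f + 1 of them would witness a larger h-index. *)
lemma hindex_few_large:
  assumes "finite S"
  shows "card {x\<in>S. f x > hindex S f} \<le> hindex S f"
proof (rule ccontr)
  let ?A = "{x\<in>S. f x > hindex S f}"
  assume "\<not> ?thesis"
  then obtain B where B: "B \<subseteq> ?A" "card B = Suc (hindex S f)"
    by (meson not_le_imp_less Suc_leI obtain_subset_with_card_n)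
  have "card B \<le> hindex S f"
    by (rule hindex_maximal[OF assms]) (use B in auto)
  with B show False by simp
qed

(* Bound (2): with the lower threshold equal to the h-index, only the few
   large elements contribute, each at most k - h. *)
lemma pot_upper_at_hindex:
  assumes "finite S"
  shows "pot (hindex S f) k S f \<le> hindex S f * (k - hindex S f)"
proof -
  define h where "h = hindex S f"
  let ?A = "{x\<in>S. f x > h}"
  have "pot h k S f = (\<Sum>x\<in>?A. min (f x) k - h)"
    unfolding pot_def using assms by (intro sum.mono_neutral_right) auto
  also have "\<dots> \<le> card ?A * (k - h)"
    using sum_mono[of ?A "\<lambda>x. min (f x) k - h" "\<lambda>_. k - h"] by auto
  also have "\<dots> \<le> h * (k - h)"
    using hindex_few_large[OF assms, of f] h_def by simp
  finally show ?thesis unfolding h_def .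
qed

(* Bound (3): with the upper cap equal to the h-index, each of the
   hindex S f witnesses contributes exactly hindex S f - h. *)
lemma pot_lower_at_hindex:
  assumes "finite S"
  shows "hindex S f * (hindex S f - h) \<le> pot h (hindex S f) S f"
proof -
  define k where "k = hindex S f"
  obtain H where H: "H \<subseteq> S" "card H = k" "\<forall>x\<in>H. k \<le> f x"
    using hindex_witness[OF assms, of f] k_def by auto
  have "k * (k - h) = (\<Sum>x\<in>H. min (f x) k - h)"
    using H by simp
  also have "\<dots> \<le> pot h k S f"
    unfolding pot_def using assms H by (intro sum_mono2) auto
  finally show ?thesis unfolding k_def .
qed

theorem lemma1:
  fixes S S' :: "'a set" and f f' :: "'a \<Rightarrow> nat" and ops :: "'a op list"
  assumes "finite S"
    and "steps (S, f) ops (S', f')"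
    and "hindex S f < hindex S' f'"
  shows "(hindex S' f' - hindex S f) ^ 2 \<le> length (filter is_inc ops)"
proof -
  define h where "h = hindex S f"
  define k where "k = hindex S' f'"
  define n where "n = length (filter is_inc ops)"
  have "finite S'"
    using steps_finite[OF assms(2)] assms(1) by simp
  have "k * (k - h) \<le> pot h k S' f'"
    using pot_lower_at_hindex[OF \<open>finite S'\<close>] k_def by simp
  also have "\<dots> \<le> pot h k S f + n"
    using steps_pot[OF assms(2)] assms(1) n_def by simp
  also have "\<dots> \<le> h * (k - h) + n"
    using pot_upper_at_hindex[OF assms(1)] h_def by simp
  finally have "k * (k - h) \<le> h * (k - h) + n" .
  moreover have "k = h + (k - h)"
    using assms(3) h_def k_def by simp
  ultimately have "(k - h) * (k - h) \<le> n"
    by (metis add_le_cancel_left distrib_right)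
  then show ?thesis
    unfolding h_def k_def n_def by (simp add: power2_eq_square)
qed

end
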